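(* Let $n>k\geq3$ be odd integers, let $A$ be a cyclically $k$-diagonal $n\times n$ array and let $g=\gcd(n,k-1)$. If $\gcd(g+1,k-1)=2$, then there exists a solution to $P(A)$.
   Context: Arrays are partially filled and toroidal; $F(A)$ is the set of filled cells. $s_R(i,j)=(i,j+t)$, $s_C(i,j)=(i+t,j)$ with $t\ge1$ minimal such that the cell is filled. For $R\in\{-1,1\}^n$, $C\in\{-1,1\}^n$, $CN_{RC}(i,j)=s_C^{c_{j'}}(i,j')$ where $(i,j')=s_R^{r_i}(i,j)$. A solution to $P(A)$ is a pair $R,C$ such that $CN_{RC}$ is a permutation of $F(A)$ forming a single cycle of length $|F(A)|$. An $n\times n$ array is cyclically $k$-diagonal if its filled cells are exactly the $(i,j)$ with $i-j\bmod n\in\{0,\dots,k-1\}$. *)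

theory Defs
  imports Main
begin

text \<open>An n x n toroidal partially filled array is represented by its set of filled
cells F, a subset of {0..<n} x {0..<n} (coordinates as integers, taken mod n).\<close>

text \<open>For d = 1 this is s_R (next filled cell to the
right, cyclically); for d = -1 it is the previous filled cell to the left, which on
filled cells is exactly the inverse permutation s_R^(-1).\<close>
definition sR :: "nat \<Rightarrow> (int \<times> int) set \<Rightarrow> int \<Rightarrow> int \<times> int \<Rightarrow> int \<times> int" where
  "sR n F d = (\<lambda>(i, j). (i, (j + d * int (LEAST t::nat. t \<ge> 1 \<and>
        (i, (j + d * int t) mod int n) \<in> F)) mod int n))"

definition sC :: "nat \<Rightarrow> (int \<times> int) set \<Rightarrow> int \<Rightarrow> int \<times> int \<Rightarrow> int \<times> int" where
  "sC n F d = (\<lambda>(i, j). ((i + d * int (LEAST t::nat. t \<ge> 1 \<and>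
        ((i + d * int t) mod int n, j) \<in> F)) mod int n, j))"

definition CN :: "nat \<Rightarrow> (int \<times> int) set \<Rightarrow> (int \<Rightarrow> int) \<Rightarrow> (int \<Rightarrow> int)
                   \<Rightarrow> int \<times> int \<Rightarrow> int \<times> int" where
  "CN n F R C = (\<lambda>(i, j). (case sR n F (R i) (i, j) of (i', j') \<Rightarrow> sC n F (C j') (i', j')))"

definition is_solution :: "nat \<Rightarrow> (int \<times> int) set \<Rightarrow> (int \<Rightarrow> int) \<Rightarrow> (int \<Rightarrow> int) \<Rightarrow> bool" where
  "is_solution n F R C \<longleftrightarrow>
     (\<forall>i\<in>{0..<int n}. R i \<in> {-1, 1}) \<and> (\<forall>j\<in>{0..<int n}. C j \<in> {-1, 1}) \<and>
     bij_betw (CN n F R C) F F \<and>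
     (\<forall>x\<in>F. \<forall>y\<in>F. \<exists>m::nat. (CN n F R C ^^ m) x = y)"

definition cyc_diag :: "nat \<Rightarrow> nat \<Rightarrow> (int \<times> int) set" where
  "cyc_diag n k = {(i, j). 0 \<le> i \<and> i < int n \<and> 0 \<le> j \<and> j < int n \<and>
                           (i - j) mod int n \<in> {0..<int k}}"

end

theory Submission
  imports Defs "HOL-Combinatorics.Cycles"
begin

text \<open>
Take R = 1 and C j = -1 exactly on the block of columns 0 <= j <= g. Write cell j e for the filled
cell in column j lying e rows below the diagonal. CN is then a bijection of the finite set F, so
reachability under CN is symmetric and it suffices that every cell reaches the hub, cell g (k - 2).

Outside the block, a cell with e >= 1 runs right along its row into column 0, and a cell with e = 0
jumps k - 1 columns to the left until it lands in the block at offset k - 2, in a column congruent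
to its start modulo g (as g divides n and k - 1). Inside the block one step adds 1 to the column
modulo g + 1 and subtracts 2 from the offset modulo k; as k is odd, from offset k - 2 the cell
reaches offset 0 exactly in column c + k - 1 mod g + 1, and lands back in that column, except that
column 0 lands in the hub. Since gcd (k - 1) (g + 1) = 2, iterating c -> c + k - 1 mod g + 1 links
every odd block column to column g and every even one to column 0.
\<close>

definition reachable :: "('a \<Rightarrow> 'a) \<Rightarrow> 'a \<Rightarrow> 'a \<Rightarrow> bool" where
  "reachable f x y \<longleftrightarrow> (\<exists>m. (f ^^ m) x = y)"

lemma reachable_refl: "reachable f x x"
  unfolding reachable_def by (metis funpow_0)

lemma reachable_funpow: "reachable f x ((f ^^ m) x)"
  unfolding reachable_def by blast

lemma reachable_step: "reachable f x (f x)"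
  using reachable_funpow[of f x 1] by simp

lemma reachable_trans: "reachable f x y \<Longrightarrow> reachable f y z \<Longrightarrow> reachable f x z"
  unfolding reachable_def by (metis funpow_add comp_apply)

lemma endo_inj_on_funpow_period:
  assumes "finite S" "f ` S \<subseteq> S" "inj_on f S" "x \<in> S"
  obtains p where "p > 0" "(f ^^ p) x = x"
proof -
  define g where "g y = (if y \<in> S then f y else y)" for y
  have "bij_betw f S S"
    using endo_inj_surj[OF assms(1-3)] assms(3) by (simp add: bij_betw_def)
  then have "bij_betw g S S"
    by (rule bij_betw_cong[THEN iffD1, rotated]) (simp add: g_def)
  then have "g permutes S"
    by (rule bij_imp_permutes) (simp add: g_def)
  then obtain p where p: "g ^^ p = id" "p > 0"
    using permutation_is_nilpotent permutation_permutes assms(1) by blast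
  have "(f ^^ m) x \<in> S \<and> (g ^^ m) x = (f ^^ m) x" for m
    by (induction m) (use assms in \<open>auto simp: g_def\<close>)
  with p show ?thesis
    using that by (metis id_apply)
qed

lemma reachable_sym:
  assumes "finite S" "f ` S \<subseteq> S" "inj_on f S" "x \<in> S" "reachable f x y"
  shows "reachable f y x"
proof -
  obtain p where p: "p > 0" "(f ^^ p) x = x"
    using endo_inj_on_funpow_period[OF assms(1-4)] .
  obtain m where "(f ^^ m) x = y"
    using assms(5) unfolding reachable_def by blast
  then have y: "y = (f ^^ (m mod p)) x"
    using funpow_mod_eq[OF p(2)] by simp
  have "(f ^^ (p - m mod p)) y = (f ^^ (p - m mod p + m mod p)) x"
    unfolding y funpow_add by simp
  also have "p - m mod p + m mod p = p"
    using p(1) by simp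
  finally show ?thesis
    using p(2) unfolding reachable_def by metis
qed

lemma reachable_all_of_reachable_hub:
  assumes "finite S" "f ` S \<subseteq> S" "inj_on f S" "h \<in> S" "\<And>x. x \<in> S \<Longrightarrow> reachable f x h"
  shows "\<forall>x\<in>S. \<forall>y\<in>S. reachable f x y"
  using assms reachable_sym reachable_trans by metis

lemma mod_add_right_cancel:
  fixes a b c m :: int
  assumes "(a + c) mod m = (b + c) mod m"
  shows "a mod m = b mod m"
  by (metis assms add_diff_cancel mod_diff_left_eq)

lemma exists_linear_mod_eq:
  fixes a b c m :: int
  assumes "gcd a m dvd c - b" "0 < m" "0 \<le> c" "c < m"
  obtains j :: nat where "1 \<le> j" "(b + int j * a) mod m = c"
proof -
  obtain u v where uv: "u * a + v * m = gcd a m"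
    using bezout_int by blast
  obtain q where q: "c - b = gcd a m * q"
    using assms(1) by blast
  define j where "j = nat ((u * q) mod m) + nat m"
  have "int j mod m = (u * q) mod m"
    unfolding j_def using assms(2) by simp
  then have "(b + int j * a) mod m = (b + u * q * a) mod m"
    by (metis mod_add_right_eq mod_mult_left_eq)
  also have "b + u * q * a = b + (u * a + v * m) * q + (- v * q) * m"
    by (simp add: algebra_simps)
  also have "\<dots> = c + (- v * q) * m"
    using uv q by simp
  also have "(c + (- v * q) * m) mod m = c"
    using assms(3,4) by (metis mod_mult_self1 mod_pos_pos_trivial)
  finally have "(b + int j * a) mod m = c" .
  moreover have "1 \<le> j"
    unfolding j_def using assms(2) by simp
  ultimately show ?thesis using that by blast
qed

lemma least_step_into_window:
  fixes d e K N :: int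
  assumes "d \<in> {-1, 1}" "0 \<le> e" "e < K" "K < N"
  shows "(LEAST t::nat. 1 \<le> t \<and> (e + d * int t) mod N < K) =
    (if 0 \<le> e + d \<and> e + d < K then 1 else nat (N - K + 1))"
proof (cases "0 \<le> e + d \<and> e + d < K")
  case True
  then show ?thesis
    using assms by (intro Least_equality) auto
next
  case False
  then have edge: "d = 1 \<and> e = K - 1 \<or> d = -1 \<and> e = 0"
    using assms by auto
  have hit: "(e + d * (N - K + 1)) mod N < K"
  proof -
    have "e + d * (N - K + 1) = (if d = 1 then 0 else K - 1) + d * N"
      using edge by auto
    then have "(e + d * (N - K + 1)) mod N = (if d = 1 then 0 else K - 1) mod N"
      by (metis mod_mult_self1)
    then show ?thesis using assms by auto
  qed
  have miss: "\<not> (e + d * int t) mod N < K" if "1 \<le> t" "int t \<le> N - K" for t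
  proof -
    have "(e + d * int t) mod N = (if d = 1 then e + int t else e - int t + N) mod N"
      using edge by auto
    also have "\<dots> = (if d = 1 then e + int t else e - int t + N)"
      using edge that assms by (intro mod_pos_pos_trivial) auto
    finally have "(e + d * int t) mod N = (if d = 1 then e + int t else e - int t + N)" .
    then show ?thesis using edge that by auto
  qed
  have "(LEAST t::nat. 1 \<le> t \<and> (e + d * int t) mod N < K) = nat (N - K + 1)"
  proof (rule Least_equality)
    show "1 \<le> nat (N - K + 1) \<and> (e + d * int (nat (N - K + 1))) mod N < K"
      using hit assms by simp
    show "nat (N - K + 1) \<le> t" if "1 \<le> t \<and> (e + d * int t) mod N < K" for t
      using miss[of t] that by linarith
  qed
  with False show ?thesis by presburger
qed

locale diag_array =
  fixes n k :: nat
  assumes k_pos: "0 < k" and k_less_n: "k < n"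
begin

abbreviation N where "N \<equiv> int n"
abbreviation K where "K \<equiv> int k"
abbreviation F where "F \<equiv> cyc_diag n k"

definition cell :: "int \<Rightarrow> int \<Rightarrow> int \<times> int" where
  "cell j e = ((j + e) mod N, j)"

definition next_col :: "int \<Rightarrow> int \<Rightarrow> int" where
  "next_col j e = (j + (if e = 0 then 1 - K else 1)) mod N"

lemma mem_F_iff: "(i, j) \<in> F \<longleftrightarrow> 0 \<le> i \<and> i < N \<and> 0 \<le> j \<and> j < N \<and> (i - j) mod N < K"
  unfolding cyc_diag_def using k_less_n by auto

lemma cell_in_F: "0 \<le> j \<Longrightarrow> j < N \<Longrightarrow> 0 \<le> e \<Longrightarrow> e < K \<Longrightarrow> cell j e \<in> F"
  unfolding cell_def mem_F_iff using k_less_n by (simp add: mod_diff_left_eq)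

lemma F_cellE:
  assumes "x \<in> F"
  obtains j e where "x = cell j e" "0 \<le> j" "j < N" "0 \<le> e" "e < K"
proof -
  obtain i j where x: "x = (i, j)" by force
  with assms have "0 \<le> i" "i < N" "0 \<le> j" "j < N" "(i - j) mod N < K"
    using mem_F_iff by auto
  moreover from this have "x = cell j ((i - j) mod N)"
    unfolding x cell_def by (simp add: mod_add_right_eq)
  ultimately show ?thesis using that by simp
qed

lemma cell_eq_iff:
  assumes "0 \<le> e" "e < K" "0 \<le> e'" "e' < K"
  shows "cell j e = cell j' e' \<longleftrightarrow> j = j' \<and> e = e'"
proof
  assume eq: "cell j e = cell j' e'"
  then have "j = j'" unfolding cell_def by simp
  have "e mod N = ((j + e) mod N - j) mod N" "e' mod N = ((j + e') mod N - j) mod N"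
    by (simp_all add: mod_diff_left_eq)
  with eq \<open>j = j'\<close> have "e mod N = e' mod N"
    unfolding cell_def by simp
  with assms k_less_n show "j = j' \<and> e = e'" using \<open>j = j'\<close> by simp
qed simp

lemma sR_cell:
  assumes "0 \<le> j" "j < N" "0 \<le> e" "e < K"
  shows "sR n F 1 (cell j e) = cell (next_col j e) ((e - 1) mod K)"
proof -
  have "((j + e) mod N, (j + int t) mod N) \<in> F \<longleftrightarrow> (e + -1 * int t) mod N < K" for t
    unfolding mem_F_iff using k_less_n by (simp add: mod_diff_eq)
  then have "(LEAST t::nat. 1 \<le> t \<and> ((j + e) mod N, (j + 1 * int t) mod N) \<in> F) =
      (if 1 \<le> e then 1 else nat (N - K + 1))"
    using least_step_into_window[of "-1" e K N] assms k_less_n by simp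
  then have "sR n F 1 (cell j e) = ((j + e) mod N, (j + (if 1 \<le> e then 1 else N - K + 1)) mod N)"
    using k_less_n unfolding sR_def cell_def by simp
  also have "\<dots> = cell (next_col j e) ((e - 1) mod K)"
  proof (cases "e = 0")
    case True
    have "(j + (N - K + 1)) mod N = (j + (1 - K)) mod N"
      using mod_add_self2[of "j + (1 - K)" N] by (simp add: algebra_simps)
    moreover have "((j + (1 - K)) mod N + (K - 1)) mod N = (j + (1 - K) + (K - 1)) mod N"
      by (rule mod_add_left_eq)
    ultimately show ?thesis using True k_pos unfolding cell_def next_col_def
      by (simp add: zmod_minus1)
  next
    case False
    then show ?thesis using assms unfolding cell_def next_col_def
      by (simp add: mod_add_left_eq)
  qed
  finally show ?thesis .
qed

lemma sC_cell:
  assumes "d \<in> {-1, 1}" "0 \<le> j" "j < N" "0 \<le> e" "e < K"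
  shows "sC n F d (cell j e) = cell j ((e + d) mod K)"
proof -
  have "(((j + e) mod N + d * int t) mod N, j) \<in> F \<longleftrightarrow> (e + d * int t) mod N < K" for t
  proof -
    have "(((j + e) mod N + d * int t) mod N - j) mod N = (e + d * int t) mod N"
    proof -
      have "(((j + e) mod N + d * int t) mod N - j) mod N = ((j + e + d * int t) mod N - j) mod N"
        by (simp only: mod_add_left_eq)
      also have "\<dots> = (j + e + d * int t - j) mod N"
        by (simp only: mod_diff_left_eq)
      finally show ?thesis by simp
    qed
    then show ?thesis unfolding mem_F_iff using assms k_less_n by simp
  qed
  then have "(LEAST t::nat. 1 \<le> t \<and> (((j + e) mod N + d * int t) mod N, j) \<in> F) =
      (if 0 \<le> e + d \<and> e + d < K then 1 else nat (N - K + 1))"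
    using least_step_into_window[of d e K N] assms k_less_n by simp
  then have "sC n F d (cell j e) =
      ((j + e + d * (if 0 \<le> e + d \<and> e + d < K then 1 else N - K + 1)) mod N, j)"
    using k_less_n unfolding sC_def cell_def by (simp add: mod_add_left_eq)
  also have "\<dots> = cell j ((e + d) mod K)"
  proof (cases "0 \<le> e + d \<and> e + d < K")
    case True
    then show ?thesis unfolding cell_def by (simp add: add.assoc)
  next
    case False
    then have "d = 1 \<and> e = K - 1 \<or> d = -1 \<and> e = 0"
      using assms by auto
    then have "j + e + d * (N - K + 1) = j + (e + d) mod K + d * N"
      using k_pos by (auto simp: zmod_minus1)
    then have "(j + e + d * (N - K + 1)) mod N = (j + (e + d) mod K) mod N"
      by (simp only: mod_mult_self1)
    with False show ?thesis unfolding cell_def by (simp add: add.assoc)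
  qed
  finally show ?thesis .
qed

lemma next_col_bounds: "0 \<le> next_col j e" "next_col j e < N"
  unfolding next_col_def using k_less_n by auto

lemma CN_cell:
  assumes "\<forall>j\<in>{0..<N}. C j \<in> {-1, 1}" "0 \<le> j" "j < N" "0 \<le> e" "e < K"
  shows "CN n F (\<lambda>_. 1) C (cell j e) = cell (next_col j e) ((e - 1 + C (next_col j e)) mod K)"
proof -
  have "CN n F (\<lambda>_. 1) C (cell j e) = sC n F (C (next_col j e)) (cell (next_col j e) ((e - 1) mod K))"
    using sR_cell[OF assms(2-5)] unfolding CN_def cell_def by simp
  also have "\<dots> = cell (next_col j e) ((e - 1 + C (next_col j e)) mod K)"
    using assms k_pos next_col_bounds sC_cell[of "C (next_col j e)" "next_col j e" "(e - 1) mod K"]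
    by (simp add: mod_add_left_eq)
  finally show ?thesis .
qed

lemma finite_F: "finite F"
  by (rule finite_subset[of _ "{0..<N} \<times> {0..<N}"]) (auto simp: mem_F_iff)

lemma CN_image_subset:
  assumes "\<forall>j\<in>{0..<N}. C j \<in> {-1, 1}"
  shows "CN n F (\<lambda>_. 1) C ` F \<subseteq> F"
proof (rule image_subsetI)
  fix x assume "x \<in> F"
  then obtain j e where "x = cell j e" "0 \<le> j" "j < N" "0 \<le> e" "e < K"
    by (rule F_cellE)
  moreover have "0 \<le> (e - 1 + C (next_col j e)) mod K" "(e - 1 + C (next_col j e)) mod K < K"
    using k_pos by simp_all
  ultimately show "CN n F (\<lambda>_. 1) C x \<in> F"
    using CN_cell[OF assms] next_col_bounds cell_in_F by presburger
qed

lemma CN_inj_on: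
  assumes "\<forall>j\<in>{0..<N}. C j \<in> {-1, 1}"
  shows "inj_on (CN n F (\<lambda>_. 1) C) F"
proof (rule inj_onI)
  fix x y assume "x \<in> F" "y \<in> F" and eq: "CN n F (\<lambda>_. 1) C x = CN n F (\<lambda>_. 1) C y"
  obtain j e where x: "x = cell j e" "0 \<le> j" "j < N" "0 \<le> e" "e < K"
    using \<open>x \<in> F\<close> by (rule F_cellE)
  obtain j' e' where y: "y = cell j' e'" "0 \<le> j'" "j' < N" "0 \<le> e'" "e' < K"
    using \<open>y \<in> F\<close> by (rule F_cellE)
  let ?c = "C (next_col j e)" and ?c' = "C (next_col j' e')"
  have "cell (next_col j e) ((e - 1 + ?c) mod K) = cell (next_col j' e') ((e' - 1 + ?c') mod K)"
    using eq x y CN_cell[OF assms] by simp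
  moreover have "0 \<le> (e - 1 + ?c) mod K" "(e - 1 + ?c) mod K < K"
    "0 \<le> (e' - 1 + ?c') mod K" "(e' - 1 + ?c') mod K < K"
    using k_pos by simp_all
  ultimately have col: "next_col j e = next_col j' e'"
    and "(e - 1 + ?c) mod K = (e' - 1 + ?c') mod K"
    using cell_eq_iff by blast+
  then have "(e + (?c - 1)) mod K = (e' + (?c - 1)) mod K"
    by (simp add: algebra_simps)
  then have "e mod K = e' mod K"
    by (rule mod_add_right_cancel)
  with x y have "e = e'" by simp
  with col have "(j + (if e = 0 then 1 - K else 1)) mod N = (j' + (if e = 0 then 1 - K else 1)) mod N"
    unfolding next_col_def by simp
  then have "j mod N = j' mod N" by (rule mod_add_right_cancel)
  with x y \<open>e = e'\<close> show "x = y" by simp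
qed

lemma CN_bij_betw:
  assumes "\<forall>j\<in>{0..<N}. C j \<in> {-1, 1}"
  shows "bij_betw (CN n F (\<lambda>_. 1) C) F F"
  using endo_inj_surj[OF finite_F CN_image_subset CN_inj_on] CN_inj_on assms
  by (simp add: bij_betw_def)

end

locale odd_diag_array = diag_array +
  assumes odd_n: "odd n" and odd_k: "odd k" and k_ge_3: "3 \<le> k"
    and gcd_cond: "gcd (gcd n (k - 1) + 1) (k - 1) = 2"
begin

definition g :: nat where "g = gcd n (k - 1)"

abbreviation G where "G \<equiv> int g"
abbreviation M where "M \<equiv> G + 1"

definition col_dir :: "int \<Rightarrow> int" where
  "col_dir j = (if 0 \<le> j \<and> j \<le> G then -1 else 1)"

definition T :: "int \<times> int \<Rightarrow> int \<times> int" where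
  "T = CN n F (\<lambda>_. 1) col_dir"

abbreviation reach where "reach \<equiv> reachable T"

abbreviation hub where "hub \<equiv> cell G (K - 2)"

lemma G_eq_gcd: "G = gcd N (K - 1)"
  using k_ge_3 unfolding g_def by (simp add: of_nat_diff flip: gcd_int_int_eq)

lemma G_dvd: "G dvd N" "G dvd K - 1"
  unfolding G_eq_gcd by simp_all

lemma odd_G: "odd G"
  using odd_n unfolding g_def by (metis dvd_trans gcd_dvd1 even_of_nat)

lemma G_bounds: "1 \<le> G" "G + 1 < N"
proof -
  show "1 \<le> G"
    using odd_G by (metis even_zero int_one_le_iff_zero_less less_le of_nat_0_le_iff)
  have "G \<le> K - 1"
    using zdvd_imp_le[OF G_dvd(2)] k_ge_3 by simp
  then show "G + 1 < N" using k_less_n by simp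
qed

lemma gcd_K_M: "gcd (K - 1) M = 2"
proof -
  have "gcd (K - 1) M = int (gcd (g + 1) (k - 1))"
    using k_ge_3 by (simp add: of_nat_diff gcd.commute ac_simps flip: gcd_int_int_eq)
  with gcd_cond show ?thesis unfolding g_def by simp
qed

lemma even_mod_M: "even (a mod M) \<longleftrightarrow> even a"
  using odd_G by (metis even_add even_iff_mod_2_eq_zero mod_mod_cancel odd_one)

lemma block_mod_M: "0 \<le> a mod M" "a mod M \<le> G"
  using G_bounds pos_mod_bound[of M a] by simp_all

lemma minus_two_mod_K: "(- 2) mod K = K - 2"
proof -
  have "(- 2) mod K = (- 2 + K) mod K" by simp
  also have "\<dots> = - 2 + K"
    using k_ge_3 by (intro mod_pos_pos_trivial) auto
  finally show ?thesis by simp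
qed

lemma bij_T: "bij_betw T F F"
  unfolding T_def col_dir_def by (rule CN_bij_betw) auto

lemma reach_sym: "x \<in> F \<Longrightarrow> reach x y \<Longrightarrow> reach y x"
  using bij_T finite_F reachable_sym by (metis bij_betw_def bij_betw_imp_inj_on order_refl)

lemma T_cell:
  assumes "0 \<le> j" "j < N" "0 \<le> e" "e < K"
  shows "T (cell j e) = cell (next_col j e) ((e - 1 + col_dir (next_col j e)) mod K)"
  unfolding T_def using CN_cell assms by (simp add: col_dir_def)

lemma T_right:
  assumes "0 \<le> j" "j < N" "1 \<le> e" "e < K" "G < (j + 1) mod N"
  shows "T (cell j e) = cell ((j + 1) mod N) e"
  using T_cell[of j e] assms by (simp add: next_col_def col_dir_def)

lemma T_block:
  assumes "0 \<le> j" "j < N" "1 \<le> e" "e < K" "(j + 1) mod N \<le> G"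
  shows "T (cell j e) = cell ((j + 1) mod N) ((e - 2) mod K)"
  using T_cell[of j e] assms by (simp add: next_col_def col_dir_def)

lemma T_zero:
  assumes "0 \<le> j" "j < N"
  shows "T (cell j 0) = cell (next_col j 0) (if next_col j 0 \<le> G then K - 2 else 0)"
  using T_cell[of j 0] assms k_ge_3 next_col_bounds[of j 0] by (simp add: col_dir_def minus_two_mod_K)

lemma funpow_T_right:
  assumes "G \<le> j" "j + int t < N" "1 \<le> e" "e < K"
  shows "(T ^^ t) (cell j e) = cell (j + int t) e"
  using assms(2)
proof (induction t)
  case (Suc t)
  have "(j + int t + 1) mod N = j + int t + 1"
    using Suc.prems assms G_bounds by simp
  then have "T (cell (j + int t) e) = cell (j + int t + 1) e"
    using T_right[of "j + int t" e] Suc.prems assms G_bounds by simp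
  with Suc show ?case by (simp add: ac_simps)
qed simp

lemma reach_exit:
  assumes "G \<le> j" "j < N" "1 \<le> e" "e < K"
  shows "reach (cell j e) (cell 0 ((e - 2) mod K))"
proof -
  have "(T ^^ nat (N - 1 - j)) (cell j e) = cell (N - 1) e"
    using funpow_T_right[of j "nat (N - 1 - j)" e] assms by simp
  moreover have "T (cell (N - 1) e) = cell 0 ((e - 2) mod K)"
    using T_block[of "N - 1" e] assms G_bounds by simp
  ultimately show ?thesis
    using reachable_funpow reachable_step reachable_trans by metis
qed

lemma reach_block_step:
  assumes "0 \<le> c" "c \<le> G" "1 \<le> e" "e < K"
  shows "reach (cell c e) (cell ((c + 1) mod M) ((e - 2) mod K))"
proof (cases "c < G")
  case True
  then have "(c + 1) mod N = c + 1" "(c + 1) mod M = c + 1"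
    using assms G_bounds by auto
  then have "T (cell c e) = cell ((c + 1) mod M) ((e - 2) mod K)"
    using T_block[of c e] True assms G_bounds by simp
  then show ?thesis using reachable_step by metis
next
  case False
  then have "c = G" using assms by simp
  moreover have "(G + 1) mod N = G + 1" using G_bounds by simp
  ultimately have "T (cell c e) = cell (G + 1) e"
    using T_right[of c e] assms G_bounds by simp
  moreover have "reach (cell (G + 1) e) (cell 0 ((e - 2) mod K))"
    using reach_exit[of "G + 1" e] assms G_bounds by simp
  ultimately show ?thesis
    using \<open>c = G\<close> reachable_step reachable_trans by (metis mod_self)
qed

lemma reach_block_walk:
  assumes "0 \<le> c" "c \<le> G" "0 \<le> e" "e < K" "\<forall>s<t. (e - 2 * int s) mod K \<noteq> 0"
  shows "reach (cell c e) (cell ((c + int t) mod M) ((e - 2 * int t) mod K))"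
  using assms(5)
proof (induction t)
  case 0
  then show ?case using assms G_bounds reachable_refl by simp
next
  case (Suc t)
  let ?c = "(c + int t) mod M" and ?e = "(e - 2 * int t) mod K"
  have "reach (cell c e) (cell ?c ?e)" using Suc by simp
  moreover have "?e \<noteq> 0" "0 \<le> ?e" "?e < K"
    using Suc.prems k_ge_3 by simp_all
  then have "reach (cell ?c ?e) (cell ((?c + 1) mod M) ((?e - 2) mod K))"
    using reach_block_step[of ?c ?e] block_mod_M by simp
  moreover have "(?c + 1) mod M = (c + int t + 1) mod M"
    by (rule mod_add_left_eq)
  moreover have "(?e - 2) mod K = (e - 2 * int t - 2) mod K"
    by (rule mod_diff_left_eq)
  ultimately show ?case
    using reachable_trans by (simp add: algebra_simps)
qed

lemma reach_block_to_zero: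
  assumes "0 \<le> c" "c \<le> G" "0 \<le> e" "e < K"
  obtains c' where "0 \<le> c'" "c' \<le> G" "reach (cell c e) (cell c' 0)"
proof -
  let ?P = "\<lambda>s::nat. (e - 2 * int s) mod K = 0"
  obtain q where q: "k = 2 * q + 1" using odd_k oddE by blast
  have s: "int (nat e * (q + 1)) = e * (int q + 1)"
    using assms(3) by (simp add: algebra_simps)
  have multiple: "e - 2 * (e * (int q + 1)) = (- e) * K"
    using q by (simp add: algebra_simps)
  have "?P (nat e * (q + 1))"
    unfolding s multiple by simp
  define t where "t = (LEAST s. ?P s)"
  have "?P t"
    unfolding t_def by (rule LeastI) fact
  moreover have "\<not> ?P s" if "s < t" for s
    using that unfolding t_def by (rule not_less_Least)
  ultimately have "reach (cell c e) (cell ((c + int t) mod M) 0)"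
    using reach_block_walk[OF assms, of t] by simp
  with that show ?thesis using block_mod_M by blast
qed

lemma reach_block_top_to_zero:
  assumes "0 \<le> c" "c \<le> G"
  shows "reach (cell c (K - 2)) (cell ((c + K - 1) mod M) 0)"
proof -
  have "(K - 2 - 2 * int s) mod K \<noteq> 0" if "s < k - 1" for s
  proof
    assume "(K - 2 - 2 * int s) mod K = 0"
    then have "K dvd K - 2 - 2 * int s"
      by (rule mod_0_imp_dvd)
    then have "K dvd K - (K - 2 - 2 * int s)"
      by (rule dvd_diff[OF dvd_refl])
    then have "K dvd 2 * (int s + 1)"
      by (simp add: algebra_simps)
    moreover have "coprime K 2"
      using odd_k by simp
    ultimately have "K dvd int s + 1"
      using coprime_dvd_mult_right_iff by blast
    then show False
      using zdvd_imp_le[of K "int s + 1"] that by simp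
  qed
  then have "reach (cell c (K - 2)) (cell ((c + int (k - 1)) mod M) ((K - 2 - 2 * int (k - 1)) mod K))"
    using reach_block_walk[of c "K - 2" "k - 1"] assms k_ge_3 by simp
  moreover have "K - 2 - 2 * int (k - 1) = - K" "c + int (k - 1) = c + K - 1"
    using k_ge_3 by simp_all
  ultimately show ?thesis by (simp add: add_diff_eq)
qed

definition jump :: "int \<Rightarrow> nat \<Rightarrow> int" where
  "jump j s = (j - int s * (K - 1)) mod N"

lemma jump_bounds: "0 \<le> jump j s" "jump j s < N"
  unfolding jump_def using k_less_n by simp_all

lemma jump_0: "0 \<le> j \<Longrightarrow> j < N \<Longrightarrow> jump j 0 = j"
  unfolding jump_def by simp

lemma next_col_jump: "next_col (jump j s) 0 = jump j (Suc s)"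
proof -
  have "(jump j s + (1 - K)) mod N = (j - int s * (K - 1) + (1 - K)) mod N"
    unfolding jump_def by (rule mod_add_left_eq)
  also have "j - int s * (K - 1) + (1 - K) = j - int (Suc s) * (K - 1)"
    by (simp add: algebra_simps)
  finally show ?thesis
    unfolding next_col_def jump_def by simp
qed

lemma jump_mod_G: "jump j s mod G = j mod G"
proof -
  have "jump j s mod G = (j - int s * (K - 1)) mod G"
    unfolding jump_def using G_dvd(1) by (rule mod_mod_cancel)
  also have "\<dots> = j mod G"
    using G_dvd(2) by (simp add: mod_eq_dvd_iff)
  finally show ?thesis .
qed

lemma jump_hits:
  assumes "G dvd c - j" "0 \<le> c" "c < N"
  obtains s where "1 \<le> s" "jump j s = c"
proof -
  have "gcd (- (K - 1)) N = G"
    unfolding G_eq_gcd by (metis gcd_neg1_int gcd.commute)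
  with assms(1) have "gcd (- (K - 1)) N dvd c - j"
    by simp
  then obtain s where "1 \<le> s" "(j + int s * (- (K - 1))) mod N = c"
    using exists_linear_mod_eq[of "- (K - 1)" N c j] assms(2,3) k_less_n by auto
  moreover have "j + int s * (- (K - 1)) = j - int s * (K - 1)"
    by (simp add: algebra_simps)
  ultimately show ?thesis
    using that unfolding jump_def by metis
qed

lemma funpow_T_jump:
  assumes "0 \<le> j" "j < N" "\<forall>s'\<in>{1..s}. G < jump j s'"
  shows "(T ^^ s) (cell j 0) = cell (jump j s) 0"
  using assms(3)
proof (induction s)
  case 0
  then show ?case using jump_0 assms(1,2) by simp
next
  case (Suc s)
  then have "(T ^^ s) (cell j 0) = cell (jump j s) 0" "G < jump j (Suc s)"
    by auto
  then show ?case
    using T_zero[of "jump j s"] jump_bounds by (simp add: next_col_jump)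
qed

lemma first_landing:
  assumes "0 \<le> j" "j < N" "1 \<le> s" "jump j s \<le> G"
  obtains s' where "1 \<le> s'" "s' \<le> s" "jump j s' \<le> G"
    "reach (cell j 0) (cell (jump j s') (K - 2))"
proof -
  let ?P = "\<lambda>s. 1 \<le> s \<and> jump j s \<le> G"
  define s' where "s' = (LEAST s. ?P s)"
  have P: "?P s'"
    unfolding s'_def by (rule LeastI[of ?P s]) (use assms in simp)
  have "s' \<le> s"
    unfolding s'_def by (rule Least_le) (use assms in simp)
  obtain r where r: "s' = Suc r"
    using P by (cases s') auto
  have "G < jump j s''" if "s'' \<in> {1..r}" for s''
  proof -
    have "s'' < s'"
      using that r by simp
    then have "\<not> ?P s''"
      using not_less_Least[of s'' ?P] unfolding s'_def by blast
    with that show ?thesis by simp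
  qed
  then have "(T ^^ r) (cell j 0) = cell (jump j r) 0"
    using funpow_T_jump[OF assms(1,2)] by blast
  moreover have "T (cell (jump j r) 0) = cell (jump j s') (K - 2)"
    using T_zero[of "jump j r"] jump_bounds P next_col_jump[of j r] r by simp
  ultimately have "(T ^^ s') (cell j 0) = cell (jump j s') (K - 2)"
    using r by simp
  with P \<open>s' \<le> s\<close> that show ?thesis
    using reachable_funpow by metis
qed

lemma reach_landing:
  assumes "0 \<le> j" "j < N"
  obtains c where "0 \<le> c" "c \<le> G" "reach (cell j 0) (cell c (K - 2))"
proof -
  have "G dvd j mod G - j"
    using mod_eq_dvd_iff[of "j mod G" G j] by simp
  moreover have "0 \<le> j mod G" "j mod G < G"
    using G_bounds by simp_all
  moreover from this have "j mod G < N"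
    using G_bounds by linarith
  ultimately obtain s where "1 \<le> s" "jump j s = j mod G"
    using jump_hits by blast
  then obtain s' where "jump j s' \<le> G" "reach (cell j 0) (cell (jump j s') (K - 2))"
    using first_landing[OF assms, of s] \<open>j mod G < G\<close> by auto
  with that show ?thesis using jump_bounds by blast
qed

lemma reach_landing_inner:
  assumes "1 \<le> c" "c < G"
  shows "reach (cell c 0) (cell c (K - 2))"
proof -
  have c: "0 \<le> c" "c < N"
    using assms G_bounds by simp_all
  obtain s where "1 \<le> s" "jump c s = c"
    using jump_hits[of c c] c by auto
  then obtain s' where s': "jump c s' \<le> G" "reach (cell c 0) (cell (jump c s') (K - 2))"
    using first_landing[OF c, of s] assms by auto
  have "jump c s' mod G = c"
    using jump_mod_G assms by simp
  moreover from this have "jump c s' < G"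
    using s'(1) assms by (cases "jump c s' = G") auto
  ultimately have "jump c s' = c"
    using jump_bounds[of c s'] by simp
  with s' show ?thesis by simp
qed

lemma reach_landing_hub: "reach (cell 0 0) hub"
proof -
  let ?P = "\<lambda>s. 1 \<le> s \<and> jump 0 s = G"
  obtain s where "?P s"
    using jump_hits[of G 0] G_bounds by auto
  define s0 where "s0 = (LEAST s. ?P s)"
  have P0: "?P s0"
    unfolding s0_def by (rule LeastI) fact
  obtain s' where s': "1 \<le> s'" "s' \<le> s0" "jump 0 s' \<le> G"
    "reach (cell 0 0) (cell (jump 0 s') (K - 2))"
    using first_landing[of 0 s0] P0 G_bounds by auto
  have "jump 0 s' = G"
  proof (rule ccontr)
    \<comment> \<open>a landing in column 0 at step s' would make the jumps from 0 hit G at step s0 - s'\<close>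
    assume "jump 0 s' \<noteq> G"
    moreover have "jump 0 s' mod G = 0"
      using jump_mod_G by simp
    ultimately have "jump 0 s' = 0"
      using s'(3) jump_bounds[of 0 s'] by simp
    then have "s' \<noteq> s0"
      using P0 G_bounds by auto
    with s'(2) have "s' < s0" by simp
    have "- int (s0 - s') * (K - 1) = - int s0 * (K - 1) - (- int s' * (K - 1))"
      using \<open>s' < s0\<close> by (simp add: of_nat_diff algebra_simps)
    then have "jump 0 (s0 - s') = (jump 0 s0 - jump 0 s') mod N"
      unfolding jump_def by (simp add: mod_diff_eq)
    then have "?P (s0 - s')"
      using P0 \<open>jump 0 s' = 0\<close> \<open>s' < s0\<close> G_bounds by simp
    then have "s0 \<le> s0 - s'"
      unfolding s0_def by (rule Least_le)
    with \<open>s' < s0\<close> s'(1) show False by simp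
  qed
  with s' show ?thesis by simp
qed

lemma block_cell_in_F: "0 \<le> c \<Longrightarrow> c \<le> G \<Longrightarrow> 0 \<le> e \<Longrightarrow> e < K \<Longrightarrow> cell c e \<in> F"
  using cell_in_F G_bounds by simp

lemma mod_M_add_K: "(a mod M + K - 1) mod M = (a + (K - 1)) mod M"
  by (metis add_diff_eq mod_add_left_eq)

lemma reach_link:
  assumes "0 \<le> c" "c \<le> G" "1 \<le> (c + K - 1) mod M" "(c + K - 1) mod M < G"
  shows "reach (cell c (K - 2)) (cell ((c + K - 1) mod M) (K - 2))"
  using reach_block_top_to_zero[OF assms(1,2)] reach_landing_inner[OF assms(3,4)]
  by (rule reachable_trans)

lemma reach_link_hub:
  assumes "0 \<le> c" "c \<le> G" "(c + K - 1) mod M = 0"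
  shows "reach (cell c (K - 2)) hub"
  using reach_block_top_to_zero[OF assms(1,2)] reach_landing_hub unfolding assms(3)
  by (rule reachable_trans)

text \<open>The orbit of G consists of odd columns, so it avoids column 0; the links point forward
  along it, so the induction walks back using symmetry.\<close>

lemma reach_hub_odd_orbit: "reach (cell ((G + int t * (K - 1)) mod M) (K - 2)) hub"
proof (induction t)
  case 0
  then show ?case using G_bounds reachable_refl by simp
next
  case (Suc t)
  let ?x = "(G + int t * (K - 1)) mod M" and ?y = "(G + int (Suc t) * (K - 1)) mod M"
  have y: "(?x + K - 1) mod M = ?y"
    unfolding mod_M_add_K by (simp add: algebra_simps)
  have "odd ?y"
    using odd_G odd_k even_mod_M by simp
  then have "?y \<noteq> 0" by auto
  show ?case
  proof (cases "?y = G")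
    case False
    with \<open>?y \<noteq> 0\<close> have "1 \<le> ?y" "?y < G"
      using block_mod_M[of "G + int (Suc t) * (K - 1)"] by linarith+
    then have link: "reach (cell ?x (K - 2)) (cell ?y (K - 2))"
      using reach_link[of ?x] block_mod_M y by simp
    have "cell ?x (K - 2) \<in> F"
      using block_cell_in_F block_mod_M k_ge_3 by simp
    then have "reach (cell ?y (K - 2)) (cell ?x (K - 2))"
      using link by (rule reach_sym)
    then show ?thesis using Suc.IH by (rule reachable_trans)
  qed (use reachable_refl in simp)
qed

lemma reach_hub_even_orbit: "reach (cell ((- int (Suc t) * (K - 1)) mod M) (K - 2)) hub"
proof (induction t)
  case 0
  have "((- (K - 1)) mod M + K - 1) mod M = 0"
    unfolding mod_M_add_K by simp
  then show ?case using reach_link_hub block_mod_M by simp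
next
  case (Suc t)
  let ?x = "(- int (Suc (Suc t)) * (K - 1)) mod M" and ?y = "(- int (Suc t) * (K - 1)) mod M"
  have y: "(?x + K - 1) mod M = ?y"
    unfolding mod_M_add_K by (simp add: algebra_simps)
  have "even ?y"
    using odd_k even_mod_M by simp
  then have "?y \<noteq> G"
    using odd_G by auto
  show ?case
  proof (cases "?y = 0")
    case True
    then show ?thesis using reach_link_hub[of ?x] block_mod_M y by simp
  next
    case False
    with \<open>?y \<noteq> G\<close> have "1 \<le> ?y" "?y < G"
      using block_mod_M[of "- int (Suc t) * (K - 1)"] by linarith+
    then have "reach (cell ?x (K - 2)) (cell ?y (K - 2))"
      using reach_link[of ?x] block_mod_M y by simp
    then show ?thesis using Suc.IH by (rule reachable_trans)
  qed
qed

lemma reach_hub_block_top: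
  assumes "0 \<le> c" "c \<le> G"
  shows "reach (cell c (K - 2)) hub"
proof (cases "even c")
  case False
  then have "gcd (K - 1) M dvd c - G"
    using odd_G gcd_K_M by simp
  then obtain t where "(G + int t * (K - 1)) mod M = c"
    using exists_linear_mod_eq[of "K - 1" M c G] assms G_bounds by auto
  then show ?thesis
    using reach_hub_odd_orbit[of t] by simp
next
  case True
  moreover have "gcd (- (K - 1)) M = 2"
    using gcd_K_M by (simp only: gcd_neg1_int)
  ultimately have "gcd (- (K - 1)) M dvd c - 0"
    by simp
  then obtain t where "1 \<le> t" "(0 + int t * (- (K - 1))) mod M = c"
    using exists_linear_mod_eq[of "- (K - 1)" M c 0] assms G_bounds by auto
  moreover from this obtain i where "t = Suc i"
    by (cases t) auto
  ultimately show ?thesis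
    using reach_hub_even_orbit[of i] by (simp add: algebra_simps)
qed

lemma reach_hub_block:
  assumes "0 \<le> c" "c \<le> G" "0 \<le> e" "e < K"
  shows "reach (cell c e) hub"
proof -
  obtain c' where c': "0 \<le> c'" "c' \<le> G" "reach (cell c e) (cell c' 0)"
    using reach_block_to_zero[OF assms] .
  moreover obtain c'' where "0 \<le> c''" "c'' \<le> G" "reach (cell c' 0) (cell c'' (K - 2))"
    using reach_landing[of c'] c' G_bounds by auto
  ultimately show ?thesis
    using reach_hub_block_top reachable_trans by meson
qed

lemma reach_hub:
  assumes "x \<in> F"
  shows "reach x hub"
proof -
  obtain j e where x: "x = cell j e" "0 \<le> j" "j < N" "0 \<le> e" "e < K"
    using assms by (rule F_cellE)
  consider "j \<le> G" | "G < j" "e = 0" | "G < j" "1 \<le> e"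
    using x by linarith
  then show ?thesis
  proof cases
    case 1
    then show ?thesis using reach_hub_block x by simp
  next
    case 2
    then obtain c where "0 \<le> c" "c \<le> G" "reach x (cell c (K - 2))"
      using reach_landing[of j] x by auto
    then show ?thesis
      using reach_hub_block_top reachable_trans by meson
  next
    case 3
    then have "reach x (cell 0 ((e - 2) mod K))"
      using reach_exit x by simp
    moreover have "reach (cell 0 ((e - 2) mod K)) hub"
      using reach_hub_block[of 0 "(e - 2) mod K"] G_bounds k_ge_3 by simp
    ultimately show ?thesis
      by (rule reachable_trans)
  qed
qed

lemma is_solution_col_dir: "is_solution n F (\<lambda>_. 1) col_dir"
proof -
  have "\<forall>x\<in>F. \<forall>y\<in>F. reach x y"
    using bij_T finite_F reach_hub block_cell_in_F[of G "K - 2"] G_bounds k_ge_3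
    by (intro reachable_all_of_reachable_hub) (auto simp: bij_betw_def)
  then show ?thesis
    using bij_T unfolding is_solution_def T_def reachable_def col_dir_def by auto
qed

end

theorem proposition5p1:
  fixes n k :: nat
  assumes "odd n" and "odd k" and "3 \<le> k" and "k < n"
    and "gcd (gcd n (k - 1) + 1) (k - 1) = 2"
  shows "\<exists>R C. is_solution n (cyc_diag n k) R C"
proof -
  interpret odd_diag_array n k
    using assms by unfold_locales auto
  show ?thesis
    using is_solution_col_dir by blast
qed

end
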